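(* Let $\Theta=\{1,2\}$, let $(A,u)$ be a decision problem with $|A|=2$, and let $P_1,\dots,P_m$ be experiments with Blackwell supremum $\overline P$. Then $$V(P_1,\dots,P_m;(A,u))=V(\overline P;(A,u))=\max_{j=1,\dots,m}V(P_j;(A,u)).$$
   Context: $\Theta$ is a finite set of states. A decision problem is a pair $(A,u)$ with $A$ a finite nonempty action set and $u:\Theta\times A\to\mathbb{R}$; for $\alpha\in\Delta(A)$ write $u(\theta,\alpha)=\sum_a\alpha(a)u(\theta,a)$. An experiment is a map $P:\Theta\to\Delta(Y)$ with $Y$ a finite signal set. Given experiments $P_j:\Theta\to\Delta(Y_j)$, $j=1,\dots,m$, let $\mathbf Y=Y_1\times\cdots\times Y_m$ and let $\mathcal P(P_1,\dots,P_m)$ be the set of experiments $P:\Theta\to\Delta(\mathbf Y)$ whose $j$-th marginal is $P_j(\cdot|\theta)$ for every $\theta$ and $j$. A strategy is a map $\sigma:\mathbf Y\to\Delta(A)$. Define $V(P_1,\dots,P_m;(A,u))=\max_{\sigma}\min_{P\in\mathcal P(P_1,\dots,P_m)}\sum_{\theta}\sum_{\mathbf y\in\mathbf Y}P(\mathbf y|\theta)u(\theta,\sigma(\mathbf y))$; for $m=1$ this is the usual value $V(P;(A,u))=\max_{\sigma:Y\to\Delta(A)}\sum_\theta\sum_y P(y|\theta)u(\theta,\sigma(y))$. An experiment $P$ is more informative than $Q$ if $V(P;(A,u))\ge V(Q;(A,u))$ for every decision problem. $R$ is a Blackwell supremum of $P_1,\dots,P_m$ if $R$ is more informative than each $P_j$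 and every $S$ more informative than all $P_j$ is more informative than $R$ (such a supremum exists when $|\Theta|=2$). *)

theory Defs
  imports Complex_Main "HOL-Library.FuncSet"
begin

definition distr :: "'x set \<Rightarrow> ('x \<Rightarrow> real) \<Rightarrow> bool" where
  "distr S p \<longleftrightarrow> (\<forall>x\<in>S. 0 \<le> p x) \<and> (\<Sum>x\<in>S. p x) = 1"

definition is_experiment :: "'th set \<Rightarrow> 'y set \<Rightarrow> ('th \<Rightarrow> 'y \<Rightarrow> real) \<Rightarrow> bool" where
  "is_experiment Th Y P \<longleftrightarrow> finite Y \<and> Y \<noteq> {} \<and> (\<forall>th\<in>Th. distr Y (P th))"

definition eu :: "'a set \<Rightarrow> ('th \<Rightarrow> 'a \<Rightarrow> real) \<Rightarrow> 'th \<Rightarrow> ('a \<Rightarrow> real) \<Rightarrow> real" where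
  "eu A u th \<alpha> = (\<Sum>a\<in>A. \<alpha> a * u th a)"

definition V1 :: "'th set \<Rightarrow> 'y set \<Rightarrow> ('th \<Rightarrow> 'y \<Rightarrow> real) \<Rightarrow> 'a set \<Rightarrow> ('th \<Rightarrow> 'a \<Rightarrow> real) \<Rightarrow> real" where
  "V1 Th Y P A u =
     (SUP \<sigma> \<in> {\<sigma>. \<forall>y\<in>Y. distr A (\<sigma> y)}. \<Sum>th\<in>Th. \<Sum>y\<in>Y. P th y * eu A u th (\<sigma> y))"

definition joint_signals :: "nat \<Rightarrow> (nat \<Rightarrow> 'y set) \<Rightarrow> (nat \<Rightarrow> 'y) set" where
  "joint_signals m Ys = PiE {1..m} Ys"

definition couplings :: "'th set \<Rightarrow> nat \<Rightarrow> (nat \<Rightarrow> 'y set) \<Rightarrow> (nat \<Rightarrow> 'th \<Rightarrow> 'y \<Rightarrow> real)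
    \<Rightarrow> ('th \<Rightarrow> (nat \<Rightarrow> 'y) \<Rightarrow> real) set" where
  "couplings Th m Ys Ps =
     {P. \<forall>th\<in>Th. distr (joint_signals m Ys) (P th) \<and>
          (\<forall>j\<in>{1..m}. \<forall>y\<in>Ys j.
             (\<Sum>ys\<in>{ys\<in>joint_signals m Ys. ys j = y}. P th ys) = Ps j th y)}"

definition Vm :: "'th set \<Rightarrow> nat \<Rightarrow> (nat \<Rightarrow> 'y set) \<Rightarrow> (nat \<Rightarrow> 'th \<Rightarrow> 'y \<Rightarrow> real)
    \<Rightarrow> 'a set \<Rightarrow> ('th \<Rightarrow> 'a \<Rightarrow> real) \<Rightarrow> real" where
  "Vm Th m Ys Ps A u =
     (SUP \<sigma> \<in> {\<sigma>. \<forall>ys\<in>joint_signals m Ys. distr A (\<sigma> ys)}.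
        INF P \<in> couplings Th m Ys Ps.
          \<Sum>th\<in>Th. \<Sum>ys\<in>joint_signals m Ys. P th ys * eu A u th (\<sigma> ys))"

(* Action sets range over finite nonempty sets of naturals (every finite action set
  is, up to relabelling, of this form). *)
definition more_informative :: "'th set \<Rightarrow> nat set \<Rightarrow> ('th \<Rightarrow> nat \<Rightarrow> real)
    \<Rightarrow> nat set \<Rightarrow> ('th \<Rightarrow> nat \<Rightarrow> real) \<Rightarrow> bool" where
  "more_informative Th Y P Z Q \<longleftrightarrow>
     (\<forall>(A::nat set) (u::'th \<Rightarrow> nat \<Rightarrow> real). finite A \<and> A \<noteq> {} \<longrightarrow>
        V1 Th Z Q A u \<le> V1 Th Y P A u)"

(* R (signals RY) is a Blackwell supremum of P_1,...,P_m. Signal sets range over finite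
  nonempty sets of naturals (every finite signal set is, up to relabelling, of this form). *)
definition blackwell_sup :: "'th set \<Rightarrow> nat \<Rightarrow> (nat \<Rightarrow> nat set) \<Rightarrow> (nat \<Rightarrow> 'th \<Rightarrow> nat \<Rightarrow> real)
    \<Rightarrow> nat set \<Rightarrow> ('th \<Rightarrow> nat \<Rightarrow> real) \<Rightarrow> bool" where
  "blackwell_sup Th m Ys Ps RY R \<longleftrightarrow>
     is_experiment Th RY R \<and>
     (\<forall>j\<in>{1..m}. more_informative Th RY R (Ys j) (Ps j)) \<and>
     (\<forall>SY S. is_experiment Th SY S \<and> (\<forall>j\<in>{1..m}. more_informative Th SY S (Ys j) (Ps j))
        \<longrightarrow> more_informative Th SY S RY R)"

end

theory Submission
  imports Defs
begin

text \<open>With two states and two actions \<open>a1, a2\<close>, the value of an experiment \<open>P\<close> is an affine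
  function of \<open>H(P) = \<Sum>y. max 0 (d1 P(1,y) + d2 P(2,y))\<close>, where \<open>d\<theta> = u(\<theta>,a1) - u(\<theta>,a2)\<close>.
  If \<open>d1\<close> and \<open>d2\<close> have the same sign, \<open>H\<close> is the same for every experiment. Otherwise
  \<open>H(P) = d1 - \<Sum>y. min (d1 P(1,y)) (-d2 P(2,y))\<close> decreases with a weighted overlap of the two
  state distributions. Gluing the common parts of all \<open>P\<^sub>j\<close>, scaled down to the smallest
  overlap, with independent products of the remainders yields a coupling \<open>Q\<close> of the \<open>P\<^sub>j\<close>
  whose overlap is at least the smallest one, so \<open>V(Q) \<le> max\<^sub>j V(P\<^sub>j)\<close>.
  Against \<open>Q\<close> no strategy on joint signals earns more than \<open>max\<^sub>j V(P\<^sub>j)\<close>, while playing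
  optimally on the best coordinate earns exactly that against every coupling. Finally \<open>Q\<close>,
  like every coupling, is more informative than each \<open>P\<^sub>j\<close>, so the Blackwell supremum is
  squeezed between \<open>max\<^sub>j V(P\<^sub>j)\<close> and \<open>V(Q)\<close>.\<close>

definition strategies :: "'y set \<Rightarrow> 'a set \<Rightarrow> ('y \<Rightarrow> 'a \<Rightarrow> real) set" where
  "strategies Y A = {\<sigma>. \<forall>y\<in>Y. distr A (\<sigma> y)}"

definition payoff :: "'th set \<Rightarrow> 'y set \<Rightarrow> ('th \<Rightarrow> 'y \<Rightarrow> real) \<Rightarrow> 'a set
    \<Rightarrow> ('th \<Rightarrow> 'a \<Rightarrow> real) \<Rightarrow> ('y \<Rightarrow> 'a \<Rightarrow> real) \<Rightarrow> real" where
  "payoff Th Y P A u \<sigma> = (\<Sum>th\<in>Th. \<Sum>y\<in>Y. P th y * eu A u th (\<sigma> y))"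

lemma V1_eq_SUP_payoff: "V1 Th Y P A u = (SUP \<sigma>\<in>strategies Y A. payoff Th Y P A u \<sigma>)"
  unfolding V1_def strategies_def payoff_def ..

lemma Vm_eq_SUP_INF_payoff:
  "Vm Th m Ys Ps A u = (SUP \<sigma>\<in>strategies (joint_signals m Ys) A.
     INF P\<in>couplings Th m Ys Ps. payoff Th (joint_signals m Ys) P A u \<sigma>)"
  unfolding Vm_def strategies_def payoff_def ..

lemma payoff_eq_sum_actions:
  "payoff Th Y P A u \<sigma> = (\<Sum>y\<in>Y. \<Sum>a\<in>A. \<sigma> y a * (\<Sum>th\<in>Th. P th y * u th a))"
proof -
  have "payoff Th Y P A u \<sigma> = (\<Sum>th\<in>Th. \<Sum>y\<in>Y. \<Sum>a\<in>A. \<sigma> y a * (P th y * u th a))"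
    unfolding payoff_def eu_def by (simp add: sum_distrib_left mult_ac)
  also have "\<dots> = (\<Sum>y\<in>Y. \<Sum>a\<in>A. \<Sum>th\<in>Th. \<sigma> y a * (P th y * u th a))"
    by (subst sum.swap) (simp add: sum.swap[of _ Th])
  finally show ?thesis by (simp add: sum_distrib_left)
qed

lemma payoff_le_sum_Max:
  assumes "finite A" "\<sigma> \<in> strategies Y A"
  shows "payoff Th Y P A u \<sigma> \<le> (\<Sum>y\<in>Y. Max ((\<lambda>a. \<Sum>th\<in>Th. P th y * u th a) ` A))"
  unfolding payoff_eq_sum_actions
proof (rule sum_mono)
  fix y assume y: "y \<in> Y"
  let ?v = "\<lambda>a. \<Sum>th\<in>Th. P th y * u th a"
  have "(\<Sum>a\<in>A. \<sigma> y a * ?v a) \<le> (\<Sum>a\<in>A. \<sigma> y a * Max (?v ` A))"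
    using assms y by (intro sum_mono mult_left_mono) (auto simp: strategies_def distr_def)
  also have "\<dots> = Max (?v ` A)"
    using assms y by (simp add: strategies_def distr_def sum_distrib_right[symmetric])
  finally show "(\<Sum>a\<in>A. \<sigma> y a * ?v a) \<le> Max (?v ` A)" .
qed

lemma sum_Max_attained:
  assumes "finite A" "A \<noteq> {}"
  shows "\<exists>\<sigma>\<in>strategies Y A.
           payoff Th Y P A u \<sigma> = (\<Sum>y\<in>Y. Max ((\<lambda>a. \<Sum>th\<in>Th. P th y * u th a) ` A))"
proof -
  define v where "v y a = (\<Sum>th\<in>Th. P th y * u th a)" for y a
  have "\<forall>y. \<exists>a\<in>A. v y a = Max (v y ` A)"
    using assms Max_in[of "v _ ` A"] by (metis finite_imageI image_iff image_is_empty)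
  then obtain best where best: "\<And>y. best y \<in> A" "\<And>y. v y (best y) = Max (v y ` A)"
    by metis
  define \<sigma> where "\<sigma> y a = (if a = best y then 1 else 0 :: real)" for y a
  have \<sigma>: "\<sigma> \<in> strategies Y A"
    using assms best(1) by (simp add: strategies_def distr_def \<sigma>_def)
  have "(\<Sum>a\<in>A. \<sigma> y a * v y a) = Max (v y ` A)" for y
  proof -
    have "(\<Sum>a\<in>A. \<sigma> y a * v y a) = (\<Sum>a\<in>A. if a = best y then v y a else 0)"
      unfolding \<sigma>_def by (intro sum.cong) auto
    then show ?thesis using assms best by (simp add: sum.delta)
  qed
  then have "payoff Th Y P A u \<sigma> = (\<Sum>y\<in>Y. Max (v y ` A))"
    unfolding payoff_eq_sum_actions v_def[symmetric] by simp
  with \<sigma> show ?thesis unfolding v_def by blast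
qed

lemma V1_eq_sum_Max:
  assumes "finite A" "A \<noteq> {}"
  shows "V1 Th Y P A u = (\<Sum>y\<in>Y. Max ((\<lambda>a. \<Sum>th\<in>Th. P th y * u th a) ` A))"
  unfolding V1_eq_SUP_payoff
proof (rule cSup_eq_maximum)
  show "(\<Sum>y\<in>Y. Max ((\<lambda>a. \<Sum>th\<in>Th. P th y * u th a) ` A)) \<in> payoff Th Y P A u ` strategies Y A"
    using sum_Max_attained[OF assms, of Y Th P u] by (metis image_eqI)
qed (use payoff_le_sum_Max[OF assms(1)] in blast)

lemma payoff_le_V1:
  assumes "finite A" "A \<noteq> {}" "\<sigma> \<in> strategies Y A"
  shows "payoff Th Y P A u \<sigma> \<le> V1 Th Y P A u"
  using payoff_le_sum_Max[OF assms(1,3)] V1_eq_sum_Max[OF assms(1,2), of Th Y P u] by simp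

lemma V1_attained:
  assumes "finite A" "A \<noteq> {}"
  obtains \<sigma> where "\<sigma> \<in> strategies Y A" "payoff Th Y P A u \<sigma> = V1 Th Y P A u"
  using sum_Max_attained[OF assms] V1_eq_sum_Max[OF assms] by metis

lemma V1_reindex_signals:
  assumes "finite A" "A \<noteq> {}" "bij_betw h Z Y"
  shows "V1 Th Z (\<lambda>th z. P th (h z)) A u = V1 Th Y P A u"
  unfolding V1_eq_sum_Max[OF assms(1,2)] using sum.reindex_bij_betw[OF assms(3)] by simp

lemma V1_reindex_actions:
  assumes "finite B" "B \<noteq> {}" "bij_betw h B A"
  shows "V1 Th Y P B (\<lambda>th b. u th (h b)) = V1 Th Y P A u"
proof -
  have A: "A = h ` B" "finite A" "A \<noteq> {}" using assms by (auto simp: bij_betw_def)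
  show ?thesis unfolding V1_eq_sum_Max[OF assms(1,2)] V1_eq_sum_Max[OF A(2,3)]
    by (simp add: A(1) image_comp comp_def)
qed

lemma more_informative_imp_V1_le:
  fixes A :: "'a set" and u :: "'th \<Rightarrow> 'a \<Rightarrow> real"
  assumes "more_informative Th Y P Z Q" "finite A" "A \<noteq> {}"
  shows "V1 Th Z Q A u \<le> V1 Th Y P A u"
proof -
  obtain h where h: "bij_betw h {0..<card A} A"
    using ex_bij_betw_nat_finite[OF assms(2)] by blast
  have B: "finite {0..<card A}" "{0..<card A} \<noteq> {}" using assms(2,3) by auto
  then have "V1 Th Z Q {0..<card A} (\<lambda>th n. u th (h n)) \<le> V1 Th Y P {0..<card A} (\<lambda>th n. u th (h n))"
    using assms(1) unfolding more_informative_def by blast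
  then show ?thesis unfolding V1_reindex_actions[OF B h] .
qed

lemma payoff_pullback:
  assumes "finite X" "finite Y" "g ` X \<subseteq> Y"
    and "\<And>th y. th \<in> Th \<Longrightarrow> y \<in> Y \<Longrightarrow> P th y = (\<Sum>x\<in>{x\<in>X. g x = y}. Q th x)"
  shows "payoff Th X Q A u (\<sigma> \<circ> g) = payoff Th Y P A u \<sigma>"
  unfolding payoff_def
proof (rule sum.cong[OF refl])
  fix th assume th: "th \<in> Th"
  have "(\<Sum>x\<in>X. Q th x * eu A u th (\<sigma> (g x)))
      = (\<Sum>y\<in>Y. \<Sum>x\<in>{x\<in>X. g x = y}. Q th x * eu A u th (\<sigma> y))"
    using sum.group[OF assms(1-3), of "\<lambda>x. Q th x * eu A u th (\<sigma> (g x))"] by simp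
  also have "\<dots> = (\<Sum>y\<in>Y. P th y * eu A u th (\<sigma> y))"
    using assms(4)[OF th] by (simp add: sum_distrib_right)
  finally show "(\<Sum>x\<in>X. Q th x * eu A u th ((\<sigma> \<circ> g) x)) = (\<Sum>y\<in>Y. P th y * eu A u th (\<sigma> y))"
    by simp
qed

lemma V1_le_pullback:
  assumes "finite A" "A \<noteq> {}" "finite X" "finite Y" "g ` X \<subseteq> Y"
    and "\<And>th y. th \<in> Th \<Longrightarrow> y \<in> Y \<Longrightarrow> P th y = (\<Sum>x\<in>{x\<in>X. g x = y}. Q th x)"
  shows "V1 Th Y P A u \<le> V1 Th X Q A u"
proof -
  obtain \<sigma> where \<sigma>: "\<sigma> \<in> strategies Y A" "payoff Th Y P A u \<sigma> = V1 Th Y P A u"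
    using V1_attained[OF assms(1,2)] .
  have "\<sigma> \<circ> g \<in> strategies X A" using \<sigma>(1) assms(5) by (auto simp: strategies_def)
  then have "payoff Th X Q A u (\<sigma> \<circ> g) \<le> V1 Th X Q A u" by (rule payoff_le_V1[OF assms(1,2)])
  then show ?thesis using payoff_pullback[OF assms(3-6), where A=A and u=u and \<sigma>=\<sigma>] \<sigma>(2) by simp
qed

lemma sum_PiE_by_coordinate:
  assumes "finite I" "\<forall>k\<in>I. finite (Ys k)" "j \<in> I"
  shows "(\<Sum>ys\<in>PiE I Ys. \<phi> ys) = (\<Sum>y\<in>Ys j. \<Sum>ys\<in>{ys\<in>PiE I Ys. ys j = y}. \<phi> ys)"
  using assms by (intro sum.group[symmetric] finite_PiE) (auto simp: PiE_def Pi_def)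

lemma PiE_coordinate_fiber:
  assumes "j \<in> I" "y \<in> Ys j"
  shows "{ys\<in>PiE I Ys. ys j = y} = PiE I (Ys(j := {y}))"
  using assms by (auto simp: PiE_def Pi_def extensional_def split: if_splits)

text \<open>The independent product of the families \<open>h k\<close>, each of total mass \<open>c\<close>, normalised
  and rescaled to mass \<open>c\<close>; for \<open>c = 0\<close> division by zero yields \<open>0\<close>, matching \<open>h = 0\<close>.\<close>

definition scaled_product :: "nat set \<Rightarrow> real \<Rightarrow> (nat \<Rightarrow> 'y \<Rightarrow> real) \<Rightarrow> (nat \<Rightarrow> 'y) \<Rightarrow> real" where
  "scaled_product I c h ys = c * (\<Prod>k\<in>I. h k (ys k) / c)"

lemma scaled_product_nonneg:
  assumes "0 \<le> c" "\<forall>k\<in>I. \<forall>y\<in>Ys k. 0 \<le> h k y" "ys \<in> PiE I Ys"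
  shows "0 \<le> scaled_product I c h ys"
  using assms unfolding scaled_product_def by (auto intro!: prod_nonneg mult_nonneg_nonneg simp: PiE_def Pi_def)

lemma scaled_product_marginal:
  assumes "finite I" "\<forall>k\<in>I. finite (Ys k)" "\<forall>k\<in>I. \<forall>y\<in>Ys k. 0 \<le> h k y"
    and "\<forall>k\<in>I. sum (h k) (Ys k) = c" "j \<in> I" "y \<in> Ys j"
  shows "(\<Sum>ys\<in>{ys\<in>PiE I Ys. ys j = y}. scaled_product I c h ys) = h j y"
proof (cases "c = 0")
  case True
  then have "h j y = 0"
    using assms(2-6) sum_nonneg_eq_0_iff[of "Ys j" "h j"] by simp
  then show ?thesis using True by (simp add: scaled_product_def)
next
  case False
  have "(\<Sum>ys\<in>{ys\<in>PiE I Ys. ys j = y}. scaled_product I c h ys)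
      = c * (\<Sum>ys\<in>PiE I (Ys(j := {y})). \<Prod>k\<in>I. h k (ys k) / c)"
    unfolding PiE_coordinate_fiber[of j I y Ys, OF assms(5,6)] scaled_product_def by (simp add: sum_distrib_left)
  also have "(\<Sum>ys\<in>PiE I (Ys(j := {y})). \<Prod>k\<in>I. h k (ys k) / c)
      = (\<Prod>k\<in>I. \<Sum>z\<in>(Ys(j := {y})) k. h k z / c)"
    using prod_sum_PiE[of I "Ys(j := {y})" "\<lambda>k z. h k z / c"] assms(1,2) by auto
  also have "\<dots> = (\<Prod>k\<in>I. if k = j then h j y / c else 1)"
    using assms(4) False by (intro prod.cong) (auto simp: sum_divide_distrib[symmetric])
  also have "\<dots> = h j y / c" using assms(1,5) by (simp add: prod.delta)
  finally show ?thesis using False by simp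
qed

text \<open>The common part of family \<open>k\<close> is its overlap \<open>min (f k) (g k)\<close> scaled down to the
  smallest total overlap.\<close>

lemma common_part_exists:
  fixes f g :: "nat \<Rightarrow> 'y \<Rightarrow> real"
  assumes "finite I" "I \<noteq> {}" "\<forall>k\<in>I. \<forall>y\<in>Ys k. 0 \<le> f k y \<and> 0 \<le> g k y"
  obtains j0 w where "j0 \<in> I"
    and "\<forall>k\<in>I. \<forall>y\<in>Ys k. 0 \<le> w k y \<and> w k y \<le> min (f k y) (g k y)"
    and "\<forall>k\<in>I. sum (w k) (Ys k) = (\<Sum>y\<in>Ys j0. min (f j0 y) (g j0 y))"
proof -
  define ov where "ov k = (\<Sum>y\<in>Ys k. min (f k y) (g k y))" for k
  have "Min (ov ` I) \<in> ov ` I" using assms(1,2) by (intro Min_in) auto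
  then obtain j0 where j0: "j0 \<in> I" "ov j0 = Min (ov ` I)" by auto
  have ov_nonneg: "\<forall>k\<in>I. 0 \<le> ov k" unfolding ov_def using assms(3) by (auto intro!: sum_nonneg)
  have ov_min: "\<forall>k\<in>I. ov j0 \<le> ov k" using j0 assms(1) by auto
  define w where "w k y = ov j0 / ov k * min (f k y) (g k y)" for k y
  have ratio: "0 \<le> ov j0 / ov k \<and> ov j0 / ov k \<le> 1" if "k \<in> I" for k
    using ov_min ov_nonneg j0(1) that by (cases "ov k = 0") (auto simp: divide_le_eq_1)
  have "\<forall>k\<in>I. \<forall>y\<in>Ys k. 0 \<le> w k y \<and> w k y \<le> min (f k y) (g k y)"
  proof (intro ballI)
    fix k y assume "k \<in> I" "y \<in> Ys k"
    then have m: "0 \<le> min (f k y) (g k y)" and r: "0 \<le> ov j0 / ov k" "ov j0 / ov k \<le> 1"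
      using assms(3) ratio by auto
    have "0 \<le> ov j0 / ov k * min (f k y) (g k y)" using r(1) m by (rule mult_nonneg_nonneg)
    moreover have "ov j0 / ov k * min (f k y) (g k y) \<le> min (f k y) (g k y)"
      using m r by (rule mult_left_le_one_le)
    ultimately show "0 \<le> w k y \<and> w k y \<le> min (f k y) (g k y)" unfolding w_def by blast
  qed
  moreover have "\<forall>k\<in>I. sum (w k) (Ys k) = ov j0"
  proof
    fix k assume k: "k \<in> I"
    have "sum (w k) (Ys k) = ov j0 / ov k * ov k" unfolding w_def ov_def by (simp add: sum_distrib_left)
    also have "\<dots> = ov j0"
      using ov_min[rule_format, OF k] ov_nonneg[rule_format, OF j0(1)] by (cases "ov k = 0") auto
    finally show "sum (w k) (Ys k) = ov j0" .
  qed
  ultimately show ?thesis using that j0(1) unfolding ov_def by blast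
qed

lemma overlap_coupling:
  fixes f g :: "nat \<Rightarrow> 'y \<Rightarrow> real"
  assumes fin: "finite I" "I \<noteq> {}" "\<forall>k\<in>I. finite (Ys k)"
    and nonneg: "\<forall>k\<in>I. \<forall>y\<in>Ys k. 0 \<le> f k y \<and> 0 \<le> g k y"
    and mass: "\<forall>k\<in>I. sum (f k) (Ys k) = F" "\<forall>k\<in>I. sum (g k) (Ys k) = G"
  obtains F' G' j0 where "j0 \<in> I" "\<forall>ys\<in>PiE I Ys. 0 \<le> F' ys \<and> 0 \<le> G' ys"
    and "\<forall>j\<in>I. \<forall>y\<in>Ys j. sum F' {ys\<in>PiE I Ys. ys j = y} = f j y
                       \<and> sum G' {ys\<in>PiE I Ys. ys j = y} = g j y"
    and "(\<Sum>y\<in>Ys j0. min (f j0 y) (g j0 y)) \<le> (\<Sum>ys\<in>PiE I Ys. min (F' ys) (G' ys))"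
proof -
  obtain j0 w where j0: "j0 \<in> I"
    and w: "\<forall>k\<in>I. \<forall>y\<in>Ys k. 0 \<le> w k y \<and> w k y \<le> min (f k y) (g k y)"
    and w_mass: "\<forall>k\<in>I. sum (w k) (Ys k) = (\<Sum>y\<in>Ys j0. min (f j0 y) (g j0 y))"
    using common_part_exists[OF fin(1,2) nonneg] by blast
  define c where "c = (\<Sum>y\<in>Ys j0. min (f j0 y) (g j0 y))"
  have c_nonneg: "0 \<le> c" unfolding c_def using nonneg j0 by (auto intro!: sum_nonneg)
  have w_nonneg: "\<forall>k\<in>I. \<forall>y\<in>Ys k. 0 \<le> w k y"
    and f_rest_nonneg: "\<forall>k\<in>I. \<forall>y\<in>Ys k. 0 \<le> f k y - w k y"
    and g_rest_nonneg: "\<forall>k\<in>I. \<forall>y\<in>Ys k. 0 \<le> g k y - w k y"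
    using w by force+
  have w_mass': "\<forall>k\<in>I. sum (w k) (Ys k) = c" using w_mass unfolding c_def .
  have f_rest_mass: "\<forall>k\<in>I. sum (\<lambda>y. f k y - w k y) (Ys k) = F - c"
    and g_rest_mass: "\<forall>k\<in>I. sum (\<lambda>y. g k y - w k y) (Ys k) = G - c"
    using mass w_mass' by (simp_all add: sum_subtractf)
  have F_rest: "0 \<le> F - c"
    unfolding f_rest_mass[rule_format, OF j0, symmetric] using f_rest_nonneg j0 by (intro sum_nonneg) auto
  have G_rest: "0 \<le> G - c"
    unfolding g_rest_mass[rule_format, OF j0, symmetric] using g_rest_nonneg j0 by (intro sum_nonneg) auto
  let ?W = "scaled_product I c w"
  define F' where "F' ys = ?W ys + scaled_product I (F - c) (\<lambda>k y. f k y - w k y) ys" for ys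
  define G' where "G' ys = ?W ys + scaled_product I (G - c) (\<lambda>k y. g k y - w k y) ys" for ys
  have parts_nonneg: "0 \<le> ?W ys \<and> 0 \<le> scaled_product I (F - c) (\<lambda>k y. f k y - w k y) ys
      \<and> 0 \<le> scaled_product I (G - c) (\<lambda>k y. g k y - w k y) ys" if "ys \<in> PiE I Ys" for ys
    using scaled_product_nonneg[OF c_nonneg w_nonneg that]
      scaled_product_nonneg[OF F_rest f_rest_nonneg that]
      scaled_product_nonneg[OF G_rest g_rest_nonneg that] by blast
  have nonneg': "\<forall>ys\<in>PiE I Ys. 0 \<le> F' ys \<and> 0 \<le> G' ys"
    unfolding F'_def G'_def using parts_nonneg by auto
  have marg: "\<forall>j\<in>I. \<forall>y\<in>Ys j. sum F' {ys\<in>PiE I Ys. ys j = y} = f j y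
                       \<and> sum G' {ys\<in>PiE I Ys. ys j = y} = g j y"
    unfolding F'_def G'_def
    using scaled_product_marginal[OF fin(1,3) w_nonneg w_mass']
      scaled_product_marginal[OF fin(1,3) f_rest_nonneg f_rest_mass]
      scaled_product_marginal[OF fin(1,3) g_rest_nonneg g_rest_mass]
    by (simp add: sum.distrib)
  have "c = (\<Sum>ys\<in>PiE I Ys. ?W ys)"
    using sum_PiE_by_coordinate[OF fin(1,3) j0, of ?W] w_mass' j0
      scaled_product_marginal[OF fin(1,3) w_nonneg w_mass' j0] by simp
  also have "\<dots> \<le> (\<Sum>ys\<in>PiE I Ys. min (F' ys) (G' ys))"
    unfolding F'_def G'_def using parts_nonneg by (intro sum_mono) auto
  finally show ?thesis using that j0 nonneg' marg unfolding c_def by blast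
qed

lemma finite_joint_signals:
  "\<forall>j\<in>{1..m}. is_experiment Th (Ys j) (Ps j) \<Longrightarrow> finite (joint_signals m Ys)"
  unfolding joint_signals_def is_experiment_def by (intro finite_PiE) auto

lemma joint_signals_nonempty:
  "\<forall>j\<in>{1..m}. is_experiment Th (Ys j) (Ps j) \<Longrightarrow> joint_signals m Ys \<noteq> {}"
  unfolding joint_signals_def is_experiment_def by (auto simp: PiE_eq_empty_iff)

lemma coupling_distr:
  "Q \<in> couplings Th m Ys Ps \<Longrightarrow> th \<in> Th \<Longrightarrow> distr (joint_signals m Ys) (Q th)"
  unfolding couplings_def by auto

lemma coupling_marginal:
  "Q \<in> couplings Th m Ys Ps \<Longrightarrow> th \<in> Th \<Longrightarrow> j \<in> {1..m} \<Longrightarrow> y \<in> Ys j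
    \<Longrightarrow> (\<Sum>ys\<in>{ys\<in>joint_signals m Ys. ys j = y}. Q th ys) = Ps j th y"
  unfolding couplings_def by auto

lemma couplingsI:
  assumes "1 \<le> m" "\<forall>j\<in>{1..m}. is_experiment Th (Ys j) (Ps j)"
    and "\<forall>th\<in>Th. \<forall>ys\<in>joint_signals m Ys. 0 \<le> Q th ys"
    and "\<forall>th\<in>Th. \<forall>j\<in>{1..m}. \<forall>y\<in>Ys j.
           (\<Sum>ys\<in>{ys\<in>joint_signals m Ys. ys j = y}. Q th ys) = Ps j th y"
  shows "Q \<in> couplings Th m Ys Ps"
  unfolding couplings_def
proof (intro CollectI ballI conjI)
  fix th assume th: "th \<in> Th"
  have one: "1 \<in> {1..m}" using assms(1) by simp
  have "sum (Q th) (joint_signals m Ys) = (\<Sum>y\<in>Ys 1. Ps 1 th y)"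
    using sum_PiE_by_coordinate[OF _ _ one, of Ys "Q th"] assms(2,4) th one
    unfolding joint_signals_def is_experiment_def by simp
  also have "\<dots> = 1" using assms(2) th one by (simp add: is_experiment_def distr_def)
  finally show "distr (joint_signals m Ys) (Q th)"
    using assms(3) th by (simp add: distr_def)
qed (use assms(4) in blast)

lemma weighted_overlap_coupling:
  fixes Ps :: "nat \<Rightarrow> nat \<Rightarrow> 'y \<Rightarrow> real"
  assumes m: "1 \<le> m" and ex: "\<forall>j\<in>{1..m}. is_experiment {1,2} (Ys j) (Ps j)"
    and pos: "0 < a" "0 < b"
  obtains Q j0 where "Q \<in> couplings {1,2} m Ys Ps" "j0 \<in> {1..m}"
    and "(\<Sum>y\<in>Ys j0. min (a * Ps j0 1 y) (b * Ps j0 2 y))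
           \<le> (\<Sum>ys\<in>joint_signals m Ys. min (a * Q 1 ys) (b * Q 2 ys))"
proof -
  let ?I = "{1..m}"
  have fin: "finite ?I" "?I \<noteq> {}" "\<forall>k\<in>?I. finite (Ys k)"
    using m ex by (auto simp: is_experiment_def)
  have nonneg: "\<forall>k\<in>?I. \<forall>y\<in>Ys k. 0 \<le> a * Ps k 1 y \<and> 0 \<le> b * Ps k 2 y"
    using ex pos by (auto simp: is_experiment_def distr_def)
  have mass: "\<forall>k\<in>?I. (\<Sum>y\<in>Ys k. a * Ps k 1 y) = a" "\<forall>k\<in>?I. (\<Sum>y\<in>Ys k. b * Ps k 2 y) = b"
    using ex by (auto simp: is_experiment_def distr_def sum_distrib_left[symmetric])
  obtain F G j0 where j0: "j0 \<in> ?I" and FG_nonneg: "\<forall>ys\<in>PiE ?I Ys. 0 \<le> F ys \<and> 0 \<le> G ys"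
    and FG_marg: "\<forall>j\<in>?I. \<forall>y\<in>Ys j. sum F {ys\<in>PiE ?I Ys. ys j = y} = a * Ps j 1 y
                                  \<and> sum G {ys\<in>PiE ?I Ys. ys j = y} = b * Ps j 2 y"
    and overlap: "(\<Sum>y\<in>Ys j0. min (a * Ps j0 1 y) (b * Ps j0 2 y))
                    \<le> (\<Sum>ys\<in>PiE ?I Ys. min (F ys) (G ys))"
    by (rule overlap_coupling[OF fin, where f="\<lambda>k y. a * Ps k 1 y" and g="\<lambda>k y. b * Ps k 2 y",
        OF nonneg mass])
  define Q where "Q th ys = (if th = (1::nat) then F ys / a else G ys / b)" for th ys
  have "Q \<in> couplings {1,2} m Ys Ps"
  proof (rule couplingsI[OF m ex])
    show "\<forall>th\<in>{1,2}. \<forall>ys\<in>joint_signals m Ys. 0 \<le> Q th ys"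
      using FG_nonneg pos unfolding Q_def joint_signals_def by auto
    show "\<forall>th\<in>{1,2}. \<forall>j\<in>?I. \<forall>y\<in>Ys j. (\<Sum>ys\<in>{ys\<in>joint_signals m Ys. ys j = y}. Q th ys) = Ps j th y"
      using FG_marg pos unfolding Q_def joint_signals_def by (auto simp: sum_divide_distrib[symmetric])
  qed
  moreover have "min (a * Q 1 ys) (b * Q 2 ys) = min (F ys) (G ys)" for ys
    using pos by (simp add: Q_def)
  ultimately show ?thesis using that j0 overlap unfolding joint_signals_def by simp
qed

lemma coordinate_maps_joint_signals:
  "j \<in> {1..m} \<Longrightarrow> (\<lambda>ys. ys j) ` joint_signals m Ys \<subseteq> Ys j"
  by (auto simp: joint_signals_def)

lemma payoff_coupling_coordinate:
  assumes "\<forall>j\<in>{1..m}. is_experiment Th (Ys j) (Ps j)" "Q \<in> couplings Th m Ys Ps" "j \<in> {1..m}"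
  shows "payoff Th (joint_signals m Ys) Q A u (\<lambda>ys. \<sigma> (ys j)) = payoff Th (Ys j) (Ps j) A u \<sigma>"
proof -
  have "payoff Th (joint_signals m Ys) Q A u (\<sigma> \<circ> (\<lambda>ys. ys j)) = payoff Th (Ys j) (Ps j) A u \<sigma>"
  proof (rule payoff_pullback[OF finite_joint_signals[OF assms(1)] _ coordinate_maps_joint_signals[OF assms(3)]])
    show "finite (Ys j)" using assms(1,3) by (simp add: is_experiment_def)
  qed (use coupling_marginal[OF assms(2) _ assms(3)] in simp)
  then show ?thesis by (simp add: comp_def)
qed

lemma V1_le_coupling:
  assumes "\<forall>j\<in>{1..m}. is_experiment Th (Ys j) (Ps j)" "Q \<in> couplings Th m Ys Ps" "j \<in> {1..m}"
    and "finite A" "A \<noteq> {}"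
  shows "V1 Th (Ys j) (Ps j) A u \<le> V1 Th (joint_signals m Ys) Q A u"
proof (rule V1_le_pullback[OF assms(4,5) finite_joint_signals[OF assms(1)] _
      coordinate_maps_joint_signals[OF assms(3)]])
  show "finite (Ys j)" using assms(1,3) by (simp add: is_experiment_def)
qed (use coupling_marginal[OF assms(2) _ assms(3)] in simp)

lemma sum_max0_diff:
  fixes a b :: "'x \<Rightarrow> real"
  assumes "(\<Sum>x\<in>X. a x) = c"
  shows "(\<Sum>x\<in>X. max 0 (a x - b x)) = c - (\<Sum>x\<in>X. min (a x) (b x))"
proof -
  have "(\<Sum>x\<in>X. max 0 (a x - b x)) = (\<Sum>x\<in>X. a x - min (a x) (b x))"
    by (intro sum.cong refl) (simp add: max_def min_def)
  then show ?thesis using assms by (simp add: sum_subtractf)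
qed

lemma V1_two_actions:
  assumes "\<forall>th\<in>Th. sum (P th) Y = 1"
  shows "V1 Th Y P {a1, a2} u
           = (\<Sum>th\<in>Th. u th a2) + (\<Sum>y\<in>Y. max 0 (\<Sum>th\<in>Th. (u th a1 - u th a2) * P th y))"
proof -
  let ?v = "\<lambda>y a. \<Sum>th\<in>Th. P th y * u th a"
  have "V1 Th Y P {a1, a2} u = (\<Sum>y\<in>Y. max (?v y a1) (?v y a2))"
    by (simp add: V1_eq_sum_Max)
  also have "\<dots> = (\<Sum>y\<in>Y. ?v y a2 + max 0 (\<Sum>th\<in>Th. (u th a1 - u th a2) * P th y))"
  proof (rule sum.cong[OF refl])
    fix y
    have "(\<Sum>th\<in>Th. (u th a1 - u th a2) * P th y) = ?v y a1 - ?v y a2"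
      by (simp add: sum_subtractf[symmetric] algebra_simps)
    then show "max (?v y a1) (?v y a2) = ?v y a2 + max 0 (\<Sum>th\<in>Th. (u th a1 - u th a2) * P th y)"
      by (simp add: max_def)
  qed
  also have "\<dots> = (\<Sum>y\<in>Y. ?v y a2) + (\<Sum>y\<in>Y. max 0 (\<Sum>th\<in>Th. (u th a1 - u th a2) * P th y))"
    by (rule sum.distrib)
  also have "(\<Sum>y\<in>Y. ?v y a2) = (\<Sum>th\<in>Th. u th a2)"
    using assms by (subst sum.swap) (simp add: sum_distrib_right[symmetric])
  finally show ?thesis .
qed

lemma hinge_same_sign:
  fixes P :: "nat \<Rightarrow> 'x \<Rightarrow> real"
  assumes "sum (P 1) X = 1" "sum (P 2) X = 1" "\<forall>x\<in>X. 0 \<le> P 1 x \<and> 0 \<le> P 2 x"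
    and "(0 \<le> d1 \<and> 0 \<le> d2) \<or> (d1 \<le> 0 \<and> d2 \<le> 0)"
  shows "(\<Sum>x\<in>X. max 0 (d1 * P 1 x + d2 * P 2 x)) = max 0 (d1 + d2)"
  using assms(4)
proof
  assume d: "0 \<le> d1 \<and> 0 \<le> d2"
  then have "(\<Sum>x\<in>X. max 0 (d1 * P 1 x + d2 * P 2 x)) = (\<Sum>x\<in>X. d1 * P 1 x + d2 * P 2 x)"
    using assms(3) by (intro sum.cong refl) (simp add: max_def)
  also have "\<dots> = d1 + d2" using assms(1,2) by (simp add: sum.distrib sum_distrib_left[symmetric])
  finally show ?thesis using d by simp
next
  assume d: "d1 \<le> 0 \<and> d2 \<le> 0"
  then have "\<forall>x\<in>X. d1 * P 1 x + d2 * P 2 x \<le> 0"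
    using assms(3) by (auto intro!: add_nonpos_nonpos mult_nonpos_nonneg)
  then show ?thesis using d by (simp add: max.absorb1)
qed

lemma hinge_eq_sub_overlap:
  fixes P :: "nat \<Rightarrow> 'x \<Rightarrow> real"
  shows "sum (P 1) X = 1 \<Longrightarrow>
      (\<Sum>x\<in>X. max 0 (d1 * P 1 x + d2 * P 2 x)) = d1 - (\<Sum>x\<in>X. min (d1 * P 1 x) (- d2 * P 2 x))"
    and "sum (P 2) X = 1 \<Longrightarrow>
      (\<Sum>x\<in>X. max 0 (d1 * P 1 x + d2 * P 2 x)) = d2 - (\<Sum>x\<in>X. min (- d1 * P 1 x) (d2 * P 2 x))"
  using sum_max0_diff[where X=X and a="\<lambda>x. d1 * P 1 x" and c=d1 and b="\<lambda>x. - d2 * P 2 x"]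
    sum_max0_diff[where X=X and a="\<lambda>x. d2 * P 2 x" and c=d2 and b="\<lambda>x. - d1 * P 1 x"]
  by (simp_all add: sum_distrib_left[symmetric] min.commute add.commute)

lemma coupling_hinge_le:
  fixes Ps :: "nat \<Rightarrow> nat \<Rightarrow> 'y \<Rightarrow> real"
  assumes m: "1 \<le> m" and ex: "\<forall>j\<in>{1..m}. is_experiment {1,2} (Ys j) (Ps j)"
  obtains Q j0 where "Q \<in> couplings {1,2} m Ys Ps" "j0 \<in> {1..m}"
    and "(\<Sum>ys\<in>joint_signals m Ys. max 0 (d1 * Q 1 ys + d2 * Q 2 ys))
           \<le> (\<Sum>y\<in>Ys j0. max 0 (d1 * Ps j0 1 y + d2 * Ps j0 2 y))"
proof -
  let ?J = "joint_signals m Ys"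
  have Q_distr: "sum (Q 1) ?J = 1 \<and> sum (Q 2) ?J = 1 \<and> (\<forall>ys\<in>?J. 0 \<le> Q 1 ys \<and> 0 \<le> Q 2 ys)"
    if "Q \<in> couplings {1,2} m Ys Ps" for Q
    using coupling_distr[OF that, of 1] coupling_distr[OF that, of 2] by (simp add: distr_def)
  have P_distr: "sum (Ps j 1) (Ys j) = 1 \<and> sum (Ps j 2) (Ys j) = 1
      \<and> (\<forall>y\<in>Ys j. 0 \<le> Ps j 1 y \<and> 0 \<le> Ps j 2 y)" if "j \<in> {1..m}" for j
    using ex that by (simp add: is_experiment_def distr_def)
  consider "(0 \<le> d1 \<and> 0 \<le> d2) \<or> (d1 \<le> 0 \<and> d2 \<le> 0)" | "0 < d1" "d2 < 0" | "d1 < 0" "0 < d2"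
    by linarith
  then show ?thesis
  proof cases
    case 1
    obtain Q j0 where Q: "Q \<in> couplings {1,2} m Ys Ps" "j0 \<in> {1..m}"
      by (rule weighted_overlap_coupling[OF m ex, where a=1 and b=1]) auto
    have "(\<Sum>ys\<in>?J. max 0 (d1 * Q 1 ys + d2 * Q 2 ys)) = max 0 (d1 + d2)"
      using Q_distr[OF Q(1)] by (intro hinge_same_sign[OF _ _ _ 1]) auto
    moreover have "(\<Sum>y\<in>Ys j0. max 0 (d1 * Ps j0 1 y + d2 * Ps j0 2 y)) = max 0 (d1 + d2)"
      using P_distr[OF Q(2)] by (intro hinge_same_sign[OF _ _ _ 1]) auto
    ultimately show ?thesis using that[OF Q] by simp
  next
    case 2
    obtain Q j0 where Q: "Q \<in> couplings {1,2} m Ys Ps" "j0 \<in> {1..m}"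
      and overlap: "(\<Sum>y\<in>Ys j0. min (d1 * Ps j0 1 y) (- d2 * Ps j0 2 y))
                      \<le> (\<Sum>ys\<in>?J. min (d1 * Q 1 ys) (- d2 * Q 2 ys))"
      by (rule weighted_overlap_coupling[OF m ex, where a=d1 and b="- d2"]) (use 2 in auto)
    have "(\<Sum>ys\<in>?J. max 0 (d1 * Q 1 ys + d2 * Q 2 ys))
        = d1 - (\<Sum>ys\<in>?J. min (d1 * Q 1 ys) (- d2 * Q 2 ys))"
      using Q_distr[OF Q(1)] by (intro hinge_eq_sub_overlap(1)) simp
    moreover have "(\<Sum>y\<in>Ys j0. max 0 (d1 * Ps j0 1 y + d2 * Ps j0 2 y))
        = d1 - (\<Sum>y\<in>Ys j0. min (d1 * Ps j0 1 y) (- d2 * Ps j0 2 y))"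
      using P_distr[OF Q(2)] by (intro hinge_eq_sub_overlap(1)) simp
    ultimately show ?thesis using overlap by (intro that[OF Q]) linarith
  next
    case 3
    obtain Q j0 where Q: "Q \<in> couplings {1,2} m Ys Ps" "j0 \<in> {1..m}"
      and overlap: "(\<Sum>y\<in>Ys j0. min (- d1 * Ps j0 1 y) (d2 * Ps j0 2 y))
                      \<le> (\<Sum>ys\<in>?J. min (- d1 * Q 1 ys) (d2 * Q 2 ys))"
      by (rule weighted_overlap_coupling[OF m ex, where a="- d1" and b=d2]) (use 3 in auto)
    have "(\<Sum>ys\<in>?J. max 0 (d1 * Q 1 ys + d2 * Q 2 ys))
        = d2 - (\<Sum>ys\<in>?J. min (- d1 * Q 1 ys) (d2 * Q 2 ys))"
      using Q_distr[OF Q(1)] by (intro hinge_eq_sub_overlap(2)) simp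
    moreover have "(\<Sum>y\<in>Ys j0. max 0 (d1 * Ps j0 1 y + d2 * Ps j0 2 y))
        = d2 - (\<Sum>y\<in>Ys j0. min (- d1 * Ps j0 1 y) (d2 * Ps j0 2 y))"
      using P_distr[OF Q(2)] by (intro hinge_eq_sub_overlap(2)) simp
    ultimately show ?thesis using overlap by (intro that[OF Q]) linarith
  qed
qed

lemma coupling_V1_le_marginal:
  fixes Ps :: "nat \<Rightarrow> nat \<Rightarrow> 'y \<Rightarrow> real" and u :: "nat \<Rightarrow> 'a \<Rightarrow> real"
  assumes "card A = 2" "1 \<le> m" "\<forall>j\<in>{1..m}. is_experiment {1,2} (Ys j) (Ps j)"
  obtains Q j0 where "Q \<in> couplings {1,2} m Ys Ps" "j0 \<in> {1..m}"
    and "V1 {1,2} (joint_signals m Ys) Q A u \<le> V1 {1,2} (Ys j0) (Ps j0) A u"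
proof -
  obtain a1 a2 where A: "A = {a1, a2}" using assms(1) card_2_iff by metis
  obtain Q j0 where Q: "Q \<in> couplings {1,2} m Ys Ps" "j0 \<in> {1..m}"
    and hinge: "(\<Sum>ys\<in>joint_signals m Ys. max 0 ((u 1 a1 - u 1 a2) * Q 1 ys + (u 2 a1 - u 2 a2) * Q 2 ys))
      \<le> (\<Sum>y\<in>Ys j0. max 0 ((u 1 a1 - u 1 a2) * Ps j0 1 y + (u 2 a1 - u 2 a2) * Ps j0 2 y))"
    using coupling_hinge_le[OF assms(2,3)] by blast
  have "\<forall>th\<in>{1,2}. sum (Q th) (joint_signals m Ys) = 1"
    using coupling_distr[OF Q(1)] by (simp add: distr_def)
  moreover have "\<forall>th\<in>{1,2}. sum (Ps j0 th) (Ys j0) = 1"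
    using assms(3) Q(2) by (simp add: is_experiment_def distr_def)
  ultimately show ?thesis
    using that[OF Q] hinge unfolding A by (simp add: V1_two_actions)
qed

lemma eu_ge_Min:
  assumes "finite A" "distr A \<alpha>"
  shows "Min (u th ` A) \<le> eu A u th \<alpha>"
proof -
  have "Min (u th ` A) = (\<Sum>a\<in>A. \<alpha> a * Min (u th ` A))"
    using assms(2) by (simp add: distr_def sum_distrib_right[symmetric])
  also have "\<dots> \<le> eu A u th \<alpha>" unfolding eu_def
    using assms by (intro sum_mono mult_left_mono) (auto simp: distr_def)
  finally show ?thesis .
qed

lemma payoff_ge_sum_Min:
  assumes "finite A" "\<sigma> \<in> strategies Y A" "\<forall>th\<in>Th. distr Y (P th)"
  shows "(\<Sum>th\<in>Th. Min (u th ` A)) \<le> payoff Th Y P A u \<sigma>"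
  unfolding payoff_def
proof (rule sum_mono)
  fix th assume th: "th \<in> Th"
  have "Min (u th ` A) = (\<Sum>y\<in>Y. P th y * Min (u th ` A))"
    using assms(3) th by (simp add: distr_def sum_distrib_right[symmetric])
  also have "\<dots> \<le> (\<Sum>y\<in>Y. P th y * eu A u th (\<sigma> y))"
  proof (rule sum_mono)
    fix y assume y: "y \<in> Y"
    have "Min (u th ` A) \<le> eu A u th (\<sigma> y)"
      using assms(2) y by (intro eu_ge_Min[OF assms(1)]) (simp add: strategies_def)
    then show "P th y * Min (u th ` A) \<le> P th y * eu A u th (\<sigma> y)"
      using assms(3) th y by (intro mult_left_mono) (simp_all add: distr_def)
  qed
  finally show "Min (u th ` A) \<le> (\<Sum>y\<in>Y. P th y * eu A u th (\<sigma> y))" .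
qed

lemma Vm_eq_Max_V1:
  assumes m: "1 \<le> m" and ex: "\<forall>j\<in>{1..m}. is_experiment Th (Ys j) (Ps j)"
    and A: "finite A" "A \<noteq> {}" and Q: "Q \<in> couplings Th m Ys Ps"
    and Q_le: "V1 Th (joint_signals m Ys) Q A u \<le> Max ((\<lambda>j. V1 Th (Ys j) (Ps j) A u) ` {1..m})"
  shows "Vm Th m Ys Ps A u = Max ((\<lambda>j. V1 Th (Ys j) (Ps j) A u) ` {1..m})"
proof -
  let ?J = "joint_signals m Ys" and ?C = "couplings Th m Ys Ps"
  let ?M = "Max ((\<lambda>j. V1 Th (Ys j) (Ps j) A u) ` {1..m})"
  let ?robust = "\<lambda>\<sigma>. INF P\<in>?C. payoff Th ?J P A u \<sigma>"
  have robust_le: "?robust \<sigma> \<le> ?M" if \<sigma>: "\<sigma> \<in> strategies ?J A" for \<sigma>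
  proof -
    have "bdd_below ((\<lambda>P. payoff Th ?J P A u \<sigma>) ` ?C)"
    proof (rule bdd_belowI2)
      fix P assume "P \<in> ?C"
      then show "(\<Sum>th\<in>Th. Min (u th ` A)) \<le> payoff Th ?J P A u \<sigma>"
        by (intro payoff_ge_sum_Min[OF A(1) \<sigma>] ballI coupling_distr)
    qed
    then have "?robust \<sigma> \<le> payoff Th ?J Q A u \<sigma>" by (rule cINF_lower[OF _ Q])
    also have "\<dots> \<le> V1 Th ?J Q A u" by (rule payoff_le_V1[OF A \<sigma>])
    finally show ?thesis using Q_le by simp
  qed
  have "?M \<in> (\<lambda>j. V1 Th (Ys j) (Ps j) A u) ` {1..m}" using m by (intro Max_in) auto
  then obtain j where j: "j \<in> {1..m}" "V1 Th (Ys j) (Ps j) A u = ?M" by auto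
  obtain \<sigma> where \<sigma>: "\<sigma> \<in> strategies (Ys j) A" "payoff Th (Ys j) (Ps j) A u \<sigma> = ?M"
    using V1_attained[OF A] j(2) by metis
  have \<tau>: "(\<lambda>ys. \<sigma> (ys j)) \<in> strategies ?J A"
    using \<sigma>(1) j(1) by (auto simp: strategies_def joint_signals_def)
  have "?robust (\<lambda>ys. \<sigma> (ys j)) = (INF P\<in>?C. ?M)"
    using payoff_coupling_coordinate[OF ex _ j(1), where \<sigma>=\<sigma>] \<sigma>(2) by (intro INF_cong) auto
  also have "\<dots> = ?M" using Q by (intro cINF_const) blast
  finally have "?robust (\<lambda>ys. \<sigma> (ys j)) = ?M" .
  then have "?M \<in> ?robust ` strategies ?J A" by (rule image_eqI[OF sym \<tau>])
  then show ?thesis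
    unfolding Vm_eq_SUP_INF_payoff using robust_le by (intro cSup_eq_maximum) auto
qed

lemma blackwell_sup_V1_eq_Max:
  fixes Ps :: "nat \<Rightarrow> 'th \<Rightarrow> nat \<Rightarrow> real"
  assumes bs: "blackwell_sup Th m Ys Ps RY R" and m: "1 \<le> m"
    and ex: "\<forall>j\<in>{1..m}. is_experiment Th (Ys j) (Ps j)"
    and A: "finite A" "A \<noteq> {}" and Q: "Q \<in> couplings Th m Ys Ps"
    and Q_le: "V1 Th (joint_signals m Ys) Q A u \<le> Max ((\<lambda>j. V1 Th (Ys j) (Ps j) A u) ` {1..m})"
  shows "V1 Th RY R A u = Max ((\<lambda>j. V1 Th (Ys j) (Ps j) A u) ` {1..m})"
proof (rule antisym)
  let ?J = "joint_signals m Ys"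
  have R_above: "\<forall>j\<in>{1..m}. more_informative Th RY R (Ys j) (Ps j)"
    and R_least: "\<And>SY S. is_experiment Th SY S \<Longrightarrow> \<forall>j\<in>{1..m}. more_informative Th SY S (Ys j) (Ps j)
                    \<Longrightarrow> more_informative Th SY S RY R"
    using bs unfolding blackwell_sup_def by blast+
  have "V1 Th (Ys j) (Ps j) A u \<le> V1 Th RY R A u" if "j \<in> {1..m}" for j
    by (rule more_informative_imp_V1_le[OF R_above[rule_format, OF that] A])
  then show "Max ((\<lambda>j. V1 Th (Ys j) (Ps j) A u) ` {1..m}) \<le> V1 Th RY R A u"
    using m by (subst Max_le_iff) auto
  obtain h where h: "bij_betw h {0..<card ?J} ?J"
    using ex_bij_betw_nat_finite[OF finite_joint_signals[OF ex]] by blast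
  define S where "S th n = Q th (h n)" for th n
  have "is_experiment Th {0..<card ?J} S"
    unfolding is_experiment_def distr_def
  proof (intro conjI ballI)
    show "{0..<card ?J} \<noteq> {}"
      using joint_signals_nonempty[OF ex] finite_joint_signals[OF ex] by auto
    fix th assume th: "th \<in> Th"
    show "0 \<le> S th n" if "n \<in> {0..<card ?J}" for n
      using coupling_distr[OF Q th] bij_betwE[OF h] that by (simp add: S_def distr_def)
    show "sum (S th) {0..<card ?J} = 1"
      using coupling_distr[OF Q th] sum.reindex_bij_betw[OF h, of "Q th"] by (simp add: S_def distr_def)
  qed simp
  moreover have "\<forall>j\<in>{1..m}. more_informative Th {0..<card ?J} S (Ys j) (Ps j)"
    unfolding more_informative_def
  proof (intro ballI allI impI)
    fix j B v assume j: "j \<in> {1..m}" and B: "finite B \<and> B \<noteq> {}"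
    then have "V1 Th (Ys j) (Ps j) B v \<le> V1 Th ?J Q B v"
      using V1_le_coupling[OF ex Q j] by blast
    moreover have "V1 Th {0..<card ?J} S B v = V1 Th ?J Q B v"
      unfolding S_def using B by (intro V1_reindex_signals[OF _ _ h]) auto
    ultimately show "V1 Th (Ys j) (Ps j) B v \<le> V1 Th {0..<card ?J} S B v" by simp
  qed
  ultimately have "V1 Th RY R A u \<le> V1 Th {0..<card ?J} S A u"
    using R_least more_informative_imp_V1_le[OF _ A] by blast
  also have "\<dots> = V1 Th ?J Q A u"
    unfolding S_def by (rule V1_reindex_signals[OF A h])
  finally show "V1 Th RY R A u \<le> Max ((\<lambda>j. V1 Th (Ys j) (Ps j) A u) ` {1..m})"
    using Q_le by simp
qed

theorem theorem1:
  fixes A :: "'a set" and u :: "nat \<Rightarrow> 'a \<Rightarrow> real"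
    and m :: nat and Ys :: "nat \<Rightarrow> nat set" and Ps :: "nat \<Rightarrow> nat \<Rightarrow> nat \<Rightarrow> real"
    and RY :: "nat set" and R :: "nat \<Rightarrow> nat \<Rightarrow> real"
  assumes "card A = 2"
    and "m \<ge> 1"
    and "\<forall>j\<in>{1..m}. is_experiment {1,2} (Ys j) (Ps j)"
    and "blackwell_sup {1,2} m Ys Ps RY R"
  shows "Vm {1,2} m Ys Ps A u = V1 {1,2} RY R A u
       \<and> V1 {1,2} RY R A u = Max ((\<lambda>j. V1 {1,2} (Ys j) (Ps j) A u) ` {1..m})"
proof -
  have A: "finite A" "A \<noteq> {}" using assms(1) by (auto simp: card_ge_0_finite)
  obtain Q j0 where Q: "Q \<in> couplings {1,2} m Ys Ps" "j0 \<in> {1..m}"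
    and Q_le_j0: "V1 {1,2} (joint_signals m Ys) Q A u \<le> V1 {1,2} (Ys j0) (Ps j0) A u"
    using coupling_V1_le_marginal[OF assms(1-3)] by blast
  have "V1 {1,2} (joint_signals m Ys) Q A u \<le> Max ((\<lambda>j. V1 {1,2} (Ys j) (Ps j) A u) ` {1..m})"
    using Q_le_j0 Q(2) by (auto intro: order_trans)
  then show ?thesis
    using Vm_eq_Max_V1[OF assms(2,3) A Q(1)] blackwell_sup_V1_eq_Max[OF assms(4,2,3) A Q(1)] by simp
qed

end
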